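(* Let $t_0>0$ and let $f:\{-1,0,1\}\times[t_0,\infty)\to[0,\infty)$ be such that $f(j,t)$ is Lebesgue measurable in $t$ for each $j$. If there are $D\ge0$ and $\alpha\in\mathbb{R}$ such that, for all $j\in\{0,1\}$ and all $t_2\ge t_1\ge t_0$, $$f(j,t_2)+\int_{t_1}^{t_2}f(j-1,t)\,dt\lesssim f(j,t_1)+t_1^{\alpha+j}D,$$ then for all $t\ge2t_0$, $$f(0,t)\lesssim_\alpha t^{-1}f(1,t/2)+t^{\alpha}D.$$
   Context: $A\lesssim B$ means $A\le CB$ for a constant $C$ independent of $t,t_1,t_2$ and $D$; $\lesssim_\alpha$ means the constant may also depend on $\alpha$. *)

theory Defs
  imports "HOL-Analysis.Analysis"
begin

end

theory Submission
  imports Defs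
begin

text \<open>For \<open>s \<in> [t/2, t]\<close> the case \<open>j = 0\<close> of the hypothesis gives
  \<open>f(0,t) \<lesssim> f(0,s) + t\<^sup>\<alpha> D\<close>. Averaging over \<open>s\<close> bounds \<open>f(0,t)\<close> by \<open>t\<^sup>-\<^sup>1\<close> times the integral
  of \<open>f(0,\<cdot>)\<close> over \<open>[t/2, t]\<close>, and the case \<open>j = 1\<close> with \<open>t\<^sub>1 = t/2\<close> bounds that integral by
  \<open>f(1,t/2) + t\<^sup>\<alpha>\<^sup>+\<^sup>1 D\<close>.\<close>

text \<open>No sign condition on \<open>c\<close>: for \<open>c < 0\<close> the left-hand side truncates to \<open>0\<close>, which
  spares a case split when the lemma is applied below.\<close>

lemma nn_integral_interval_ge_const:
  fixes g :: "real \<Rightarrow> real"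
  assumes "a \<le> b" and "\<And>s. s \<in> {a..b} \<Longrightarrow> c \<le> g s"
  shows "ennreal (c * (b - a)) \<le> (\<integral>\<^sup>+ s\<in>{a..b}. ennreal (g s) \<partial>lebesgue)"
proof -
  have "ennreal (c * (b - a)) = (\<integral>\<^sup>+ s. ennreal c * indicator {a..b} s \<partial>lebesgue)"
    using assms(1) by (simp add: nn_integral_cmult_indicator ennreal_mult'')
  also have "\<dots> \<le> (\<integral>\<^sup>+ s\<in>{a..b}. ennreal (g s) \<partial>lebesgue)"
    using assms(2) by (intro nn_integral_mono) (auto simp: indicator_def ennreal_leI)
  finally show ?thesis .
qed

lemma powr_le_on_half_interval:
  fixes s t \<alpha> :: real
  assumes "0 < t" "t / 2 \<le> s" "s \<le> t"
  shows "s powr \<alpha> \<le> max (2 powr -\<alpha>) 1 * t powr \<alpha>"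
proof (cases "\<alpha> \<ge> 0")
  case True
  then have "s powr \<alpha> \<le> 1 * t powr \<alpha>"
    using assms by (simp add: powr_mono2)
  also have "\<dots> \<le> max (2 powr -\<alpha>) 1 * t powr \<alpha>"
    by (intro mult_right_mono) auto
  finally show ?thesis .
next
  case False
  then have "s powr \<alpha> \<le> (t / 2) powr \<alpha>"
    using assms by (intro powr_mono2') auto
  also have "\<dots> = 2 powr -\<alpha> * t powr \<alpha>"
    using assms(1) by (simp add: powr_divide powr_minus_divide)
  also have "\<dots> \<le> max (2 powr -\<alpha>) 1 * t powr \<alpha>"
    by (intro mult_right_mono) auto
  finally show ?thesis .
qed

lemma bound_by_half_interval_average:
  fixes f0 f1 :: "real \<Rightarrow> real" and C D t \<alpha> :: real
  assumes C: "C > 0" and t: "t > 0" and D: "D \<ge> 0" and f1: "f1 (t / 2) \<ge> 0"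
    and decay: "\<And>s. t / 2 \<le> s \<Longrightarrow> s \<le> t \<Longrightarrow> f0 t \<le> C * (f0 s + s powr \<alpha> * D)"
    and integral: "(\<integral>\<^sup>+ s\<in>{t/2..t}. ennreal (f0 s) \<partial>lebesgue)
                     \<le> ennreal (C * (f1 (t / 2) + (t / 2) powr (\<alpha> + 1) * D))"
  shows "f0 t \<le> ((C + C\<^sup>2) * max (2 powr -\<alpha>) 1 + 2 * C\<^sup>2) * (t powr -1 * f1 (t / 2) + t powr \<alpha> * D)"
proof -
  define M where "M = max (2 powr -\<alpha>) 1"
  define K where "K = M * t powr \<alpha> * D"
  have M: "M \<ge> 1" by (simp add: M_def)
  have pow_half: "s powr \<alpha> \<le> M * t powr \<alpha>" if "t / 2 \<le> s" "s \<le> t" for s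
    unfolding M_def using powr_le_on_half_interval t that by blast
  define c where "c = (f0 t - C * K) / C"
  have "c \<le> f0 s" if "s \<in> {t/2..t}" for s
  proof -
    have "f0 t \<le> C * (f0 s + s powr \<alpha> * D)" using decay that by auto
    also have "\<dots> \<le> C * (f0 s + M * t powr \<alpha> * D)"
      using pow_half[of s] that C D by (auto intro!: mult_left_mono mult_right_mono)
    finally show ?thesis using C by (simp add: c_def K_def field_simps)
  qed
  then have "ennreal (c * (t - t / 2)) \<le> ennreal (C * (f1 (t / 2) + (t / 2) powr (\<alpha> + 1) * D))"
    using nn_integral_interval_ge_const[of "t/2" t c f0] integral t by auto
  then have "c * (t / 2) \<le> C * (f1 (t / 2) + (t / 2) powr \<alpha> * (t / 2) * D)"
    using C D f1 t by (subst (asm) ennreal_le_iff) (auto simp: powr_add)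
  then have "f0 t \<le> C * K + 2 * C\<^sup>2 * (t powr -1 * f1 (t / 2)) + C\<^sup>2 * (t / 2) powr \<alpha> * D"
    using C t by (simp add: c_def field_simps power2_eq_square powr_minus)
  also have "\<dots> \<le> (C + C\<^sup>2) * M * (t powr \<alpha> * D) + 2 * C\<^sup>2 * (t powr -1 * f1 (t / 2))"
    using mult_right_mono[OF mult_left_mono[OF pow_half[of "t/2"]], of "C\<^sup>2" D] t D
    by (simp add: K_def algebra_simps)
  also have "\<dots> \<le> ((C + C\<^sup>2) * M + 2 * C\<^sup>2) * (t powr -1 * f1 (t / 2) + t powr \<alpha> * D)"
    using C M D f1 t by (simp add: algebra_simps)
  finally show ?thesis unfolding M_def .
qed

theorem lemma5p1:
  fixes \<alpha> C :: real
  assumes "C > 0"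
  shows "\<exists>C'. \<forall>(t0::real) (f::int \<Rightarrow> real \<Rightarrow> real) (D::real).
    (t0 > 0 \<and> D \<ge> 0
     \<and> (\<forall>j\<in>{-1,0,1}. \<forall>t\<ge>t0. f j t \<ge> 0)
     \<and> (\<forall>j\<in>{-1,0,1}. set_borel_measurable lebesgue {t0..} (f j))
     \<and> (\<forall>j\<in>{0,1}. \<forall>t1 t2. t0 \<le> t1 \<and> t1 \<le> t2 \<longrightarrow>
          ennreal (f j t2) + (\<integral>\<^sup>+ t\<in>{t1..t2}. ennreal (f (j - 1) t) \<partial>lebesgue)
            \<le> ennreal (C * (f j t1 + t1 powr (\<alpha> + real_of_int j) * D))))
    \<longrightarrow> (\<forall>t\<ge>2 * t0. f 0 t \<le> C' * (t powr (-1) * f 1 (t / 2) + t powr \<alpha> * D))"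
proof (intro exI allI impI)
  fix t0 D t :: real and f :: "int \<Rightarrow> real \<Rightarrow> real"
  assume H: "t0 > 0 \<and> D \<ge> 0
     \<and> (\<forall>j\<in>{-1,0,1}. \<forall>t\<ge>t0. f j t \<ge> 0)
     \<and> (\<forall>j\<in>{-1,0,1}. set_borel_measurable lebesgue {t0..} (f j))
     \<and> (\<forall>j\<in>{0,1}. \<forall>t1 t2. t0 \<le> t1 \<and> t1 \<le> t2 \<longrightarrow>
          ennreal (f j t2) + (\<integral>\<^sup>+ t\<in>{t1..t2}. ennreal (f (j - 1) t) \<partial>lebesgue)
            \<le> ennreal (C * (f j t1 + t1 powr (\<alpha> + real_of_int j) * D)))"
    and t: "t \<ge> 2 * t0"
  then have t0: "t0 > 0" "t0 \<le> t / 2" and D: "D \<ge> 0" by auto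
  have hyp: "ennreal (f j t2) + (\<integral>\<^sup>+ s\<in>{t1..t2}. ennreal (f (j - 1) s) \<partial>lebesgue)
      \<le> ennreal (C * (f j t1 + t1 powr (\<alpha> + j) * D))" if "j \<in> {0, 1}" "t0 \<le> t1" "t1 \<le> t2" for j t1 t2
    using H that by blast
  have nonneg: "f j s \<ge> 0" if "j \<in> {0, 1}" "t0 \<le> s" for j s
    using H that by auto
  show "f 0 t \<le> ((C + C\<^sup>2) * max (2 powr -\<alpha>) 1 + 2 * C\<^sup>2) * (t powr (-1) * f 1 (t / 2) + t powr \<alpha> * D)"
  proof (rule bound_by_half_interval_average)
    show "f 0 t \<le> C * (f 0 s + s powr \<alpha> * D)" if "t / 2 \<le> s" "s \<le> t" for s
    proof -
      have "ennreal (f 0 t) \<le> ennreal (C * (f 0 s + s powr \<alpha> * D))"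
        using hyp[of 0 s t] that t0 by (auto intro: order_trans[rotated])
      then show ?thesis
        using nonneg[of 0 s] that t0 D \<open>C > 0\<close> by (subst (asm) ennreal_le_iff) auto
    qed
    show "(\<integral>\<^sup>+ s\<in>{t/2..t}. ennreal (f 0 s) \<partial>lebesgue)
        \<le> ennreal (C * (f 1 (t / 2) + (t / 2) powr (\<alpha> + 1) * D))"
      using hyp[of 1 "t/2" t] t0 by (auto intro: order_trans[rotated])
  qed (use \<open>C > 0\<close> t0 D nonneg in auto)
qed

end
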